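(* Let $G$ be a graph with $n$ vertices and adjacency matrix $A$. (i) If all eigenvalues of $A$ are equal to $\pm 1$, then $G=\frac{n}{2}K_2$. (ii) If all but one eigenvalue of $A$ (counted with multiplicity) are equal to $\pm 1$, then $G$ is a disjoint union of complete graphs in which all but one of the connected components are equal to $K_2$. (iii) If $A$ has exactly two eigenvalues $r$ and $s$ with $r\geq s$ (counted with multiplicity) different from $\pm 1$, then either $r>1$ and $s<-1$, or $G$ is a disjoint union of complete graphs with exactly two connected components different from $K_2$.
   Context: Graphs are finite, simple and undirected. Eigenvalues of a graph are those of its adjacency matrix. $\frac{n}{2}K_2$ denotes the disjoint union of $n/2$ copies of the complete graph $K_2$ (a perfect matching). *)

theory Defs
  imports "Jordan_Normal_Form.Char_Poly" "HOL-Computational_Algebra.Polynomial"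
begin

definition simple_graph :: "nat \<Rightarrow> (nat \<Rightarrow> nat \<Rightarrow> bool) \<Rightarrow> bool" where
  "simple_graph n E \<longleftrightarrow>
     (\<forall>i j. E i j \<longrightarrow> i < n \<and> j < n) \<and>
     (\<forall>i j. E i j \<longrightarrow> E j i) \<and>
     (\<forall>i. \<not> E i i)"

definition adj_matrix :: "nat \<Rightarrow> (nat \<Rightarrow> nat \<Rightarrow> bool) \<Rightarrow> real mat" where
  "adj_matrix n E = mat n n (\<lambda>(i, j). if E i j then 1 else 0)"

text \<open>The eigenvalues of a real matrix counted with multiplicity: the multiset of
  roots of its characteristic polynomial (for symmetric matrices all roots are real).\<close>
definition eigenvalues_mset :: "real mat \<Rightarrow> real multiset" where
  "eigenvalues_mset A = proots (char_poly A)"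

definition component :: "nat \<Rightarrow> (nat \<Rightarrow> nat \<Rightarrow> bool) \<Rightarrow> nat \<Rightarrow> nat set" where
  "component n E v = {u. u < n \<and> E\<^sup>*\<^sup>* v u}"

definition components :: "nat \<Rightarrow> (nat \<Rightarrow> nat \<Rightarrow> bool) \<Rightarrow> nat set set" where
  "components n E = component n E ` {..<n}"

definition union_of_cliques :: "nat \<Rightarrow> (nat \<Rightarrow> nat \<Rightarrow> bool) \<Rightarrow> bool" where
  "union_of_cliques n E \<longleftrightarrow>
     (\<forall>C \<in> components n E. \<forall>x \<in> C. \<forall>y \<in> C. x \<noteq> y \<longrightarrow> E x y)"

text \<open>G = (n/2) K_2, i.e. G is a perfect matching: every vertex has exactly one neighbour.\<close>
definition perfect_matching :: "nat \<Rightarrow> (nat \<Rightarrow> nat \<Rightarrow> bool) \<Rightarrow> bool" where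
  "perfect_matching n E \<longleftrightarrow> (\<forall>v < n. card {u. E v u} = 1)"

text \<open>Number of connected components that are not K_2 (in a union of cliques,
  a component is K_2 iff it has exactly 2 vertices).\<close>
definition num_non_K2_components :: "nat \<Rightarrow> (nat \<Rightarrow> nat \<Rightarrow> bool) \<Rightarrow> nat" where
  "num_non_K2_components n E = card {C \<in> components n E. card C \<noteq> 2}"

end

theory Submission
  imports Defs "Jordan_Normal_Form.Schur_Decomposition"
begin

text \<open>In each of the three cases all eigenvalues of A lie on one side: all are at least -1, or all
  are at most 1 (in case (iii) unless r > 1 and s < -1). Then I + A or I - A is positive
  semidefinite, hence a Gram matrix, and an induced path i - k - j is impossible: its Gram vectors
  would give u_i + u_j \<mp> 2 u_k squared length -2. So G is a disjoint union of cliques, and a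
  component K_m contributes the eigenvalue m - 1 once and -1 with multiplicity m - 1; thus the
  eigenvalues different from \<plusminus>1 are counted by the components other than K_2.

  No spectral theorem is needed: the eigenvalues enter only through the trace identity
  tr g(A) = \<Sum> g(\<lambda>) for polynomials g, which follows from Schur triangularisation. A polynomial
  vanishing on the spectrum gives tr (g(A) g(A)) = 0, so the symmetric matrix g(A) is zero;
  hence q(A) = h(A) h(A) whenever h interpolates the square root of q \<ge> 0 on the spectrum.
  Interpolating the indicator of the eigenvalues different from \<plusminus>1 then does the counting.\<close>

section \<open>Power traces of real symmetric matrices\<close>

lemma real_symmetric_eigenvalue_real:
  fixes A :: "real mat"
  assumes A: "A \<in> carrier_mat n n" and sym: "\<forall>i<n. \<forall>j<n. A $$ (i,j) = A $$ (j,i)"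
    and ev: "eigenvalue (map_mat complex_of_real A) a"
  shows "Im a = 0"
proof -
  let ?Ac = "map_mat complex_of_real A"
  obtain v where vc: "v \<in> carrier_vec n" and v0: "v \<noteq> 0\<^sub>v n" and eq: "?Ac *\<^sub>v v = a \<cdot>\<^sub>v v"
    using ev A unfolding eigenvalue_def eigenvector_def by auto
  define T where "T = (\<Sum>i<n. \<Sum>j<n. complex_of_real (A $$ (i,j)) * cnj (v$i) * v$j)"
  define r where "r = (\<Sum>i<n. (cmod (v$i))\<^sup>2)"
  have "(?Ac *\<^sub>v v) $ i = (\<Sum>j<n. complex_of_real (A $$ (i,j)) * v$j)" if "i < n" for i
    using that A vc by (auto simp: scalar_prod_def lessThan_atLeast0 intro!: sum.cong)
  then have "T = (\<Sum>i<n. cnj (v$i) * (a * v$i))"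
    using eq vc unfolding T_def
    by (auto simp: sum_distrib_left mult.commute mult.left_commute intro!: sum.cong)
  also have "\<dots> = a * complex_of_real r"
  proof -
    have norm_sq: "cnj z * (a * z) = a * complex_of_real ((cmod z)\<^sup>2)" for z
      using complex_norm_square by auto
    show ?thesis unfolding r_def of_real_sum sum_distrib_left by (simp only: norm_sq)
  qed
  finally have T_eq: "T = a * complex_of_real r" .
  have "cnj T = (\<Sum>i<n. \<Sum>j<n. complex_of_real (A $$ (i,j)) * v$i * cnj (v$j))"
    unfolding T_def by simp
  also have "\<dots> = (\<Sum>j<n. \<Sum>i<n. complex_of_real (A $$ (i,j)) * v$i * cnj (v$j))"
    by (rule sum.swap)
  also have "\<dots> = T"
    unfolding T_def using sym by (auto intro!: sum.cong simp: mult.commute mult.left_commute)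
  finally have "cnj T = T" .
  moreover have "r > 0"
  proof -
    obtain i where "i < n" "v $ i \<noteq> 0"
      using v0 vc by (metis eq_vecI carrier_vecD index_zero_vec(1,2))
    then have "0 < (cmod (v$i))\<^sup>2" "(cmod (v$i))\<^sup>2 \<le> r"
      unfolding r_def by (auto intro: member_le_sum)
    then show ?thesis by linarith
  qed
  ultimately have "cnj a = a" using T_eq by simp
  then show ?thesis by (metis complex_cnj_cancel_iff complex.sel(2) cnj.sel(2) neg_equal_zero)
qed

lemma char_poly_real_symmetric_splits:
  fixes A :: "real mat"
  assumes A: "A \<in> carrier_mat n n" and sym: "\<forall>i<n. \<forall>j<n. A $$ (i,j) = A $$ (j,i)"
  obtains es where "char_poly A = (\<Prod>e\<leftarrow>es. [:-e, 1:])"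
proof -
  interpret of_real_poly: map_poly_inj_comm_ring_hom complex_of_real ..
  let ?Ac = "map_mat complex_of_real A"
  have Ac: "?Ac \<in> carrier_mat n n" using A by simp
  obtain as where as: "char_poly ?Ac = (\<Prod>a\<leftarrow>as. [:-a, 1:])"
    using char_poly_factorized[OF Ac] by blast
  have "Im a = 0" if "a \<in> set as" for a
  proof (rule real_symmetric_eigenvalue_real[OF A sym])
    have "poly (char_poly ?Ac) a = 0"
      unfolding as using that by (simp add: poly_prod_list prod_list_zero_iff)
    then show "eigenvalue ?Ac a" using eigenvalue_root_char_poly[OF Ac] by simp
  qed
  then have "map_poly complex_of_real [:-Re a, 1:] = [:-a, 1:]" if "a \<in> set as" for a
    using that by (simp add: complex_eqI)
  then have "map_poly complex_of_real (\<Prod>e\<leftarrow>map Re as. [:-e, 1:]) = char_poly ?Ac"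
    unfolding as of_real_poly.hom_prod_list by (simp add: o_def cong: map_cong)
  also have "\<dots> = map_poly complex_of_real (char_poly A)"
    by (rule of_real_hom.char_poly_hom[OF A])
  finally show thesis by (intro that[of "map Re as"]) (simp add: of_real_poly.eq_iff)
qed

lemma proots_prod_linear_factors: "proots (\<Prod>e\<leftarrow>es. [:-e, 1:]) = mset (es :: 'a :: idom list)"
proof (induct es)
  case (Cons e es)
  have "(\<Prod>e\<leftarrow>es. [:-e, 1:]) \<noteq> (0 :: 'a poly)" by (auto simp: prod_list_zero_iff)
  then have "proots ([:-e, 1:] * (\<Prod>e\<leftarrow>es. [:-e, 1:]))
      = proots [:-e, 1:] + proots (\<Prod>e\<leftarrow>es. [:-e, 1:])"
    by (intro proots_mult) auto
  moreover have "proots [:-e, 1:] = {#e#}"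
    using proots_linear_factor[of "-e"] by simp
  ultimately show ?case using Cons by simp
qed simp

lemma index_mult_mat_sum:
  fixes X Y :: "'a :: comm_ring_1 mat"
  assumes "X \<in> carrier_mat n n" "Y \<in> carrier_mat n n" "i < n" "j < n"
  shows "(X * Y) $$ (i,j) = (\<Sum>l<n. X $$ (i,l) * Y $$ (l,j))"
  using assms by (simp add: scalar_prod_def lessThan_atLeast0)

lemma sum_diag_mult_comm:
  fixes X Y :: "'a :: comm_ring_1 mat"
  assumes X: "X \<in> carrier_mat n n" and Y: "Y \<in> carrier_mat n n"
  shows "(\<Sum>i<n. (X * Y) $$ (i,i)) = (\<Sum>i<n. (Y * X) $$ (i,i))"
proof -
  have "(\<Sum>i<n. (X * Y) $$ (i,i)) = (\<Sum>i<n. \<Sum>l<n. X $$ (i,l) * Y $$ (l,i))"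
    by (intro sum.cong refl) (simp add: index_mult_mat_sum[OF X Y] del: index_mult_mat)
  also have "\<dots> = (\<Sum>l<n. \<Sum>i<n. Y $$ (l,i) * X $$ (i,l))"
    by (subst sum.swap) (simp add: mult.commute)
  also have "\<dots> = (\<Sum>i<n. (Y * X) $$ (i,i))"
    by (intro sum.cong refl) (simp add: index_mult_mat_sum[OF Y X] del: index_mult_mat)
  finally show ?thesis .
qed

lemma upper_triangular_power:
  fixes B :: "'a :: comm_ring_1 mat"
  assumes B: "B \<in> carrier_mat n n" and ut: "upper_triangular B"
  shows "upper_triangular (B ^\<^sub>m k) \<and> (\<forall>j<n. (B ^\<^sub>m k) $$ (j,j) = B $$ (j,j) ^ k)"
proof (induct k)
  case 0
  then show ?case using B by auto
next
  case (Suc k)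
  let ?C = "B ^\<^sub>m k"
  have C: "?C \<in> carrier_mat n n" using B by simp
  have lower_zero: "?C $$ (i,l) * B $$ (l,j) = 0"
    if "i < n" "l < n" "j < i \<or> (j = i \<and> l \<noteq> i)" for i j l
    using Suc C B ut that by (cases "l < i") (auto simp: upper_triangular_def)
  have "(?C * B) $$ (i,j) = 0" if "i < n" "j < i" for i j
    using that lower_zero by (simp add: index_mult_mat_sum[OF C B] del: index_mult_mat)
  moreover have "(?C * B) $$ (j,j) = B $$ (j,j) ^ Suc k" if "j < n" for j
  proof -
    have "(?C * B) $$ (j,j) = ?C $$ (j,j) * B $$ (j,j)"
      using that lower_zero[of j _ j]
      by (simp add: index_mult_mat_sum[OF C B] sum.remove[of _ j] del: index_mult_mat)
    then show ?thesis using Suc that by simp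
  qed
  ultimately show ?case using C B by (auto simp: upper_triangular_def)
qed

lemma sum_diag_power_char_poly:
  fixes A :: "real mat"
  assumes A: "A \<in> carrier_mat n n" and cp: "char_poly A = (\<Prod>e\<leftarrow>es. [:-e, 1:])"
  shows "(\<Sum>i<n. (A ^\<^sub>m k) $$ (i,i)) = (\<Sum>e\<leftarrow>es. e ^ k)"
proof -
  obtain B P Q where "schur_decomposition A es = (B,P,Q)"
    by (cases "schur_decomposition A es") auto
  from schur_decomposition[OF A cp this]
  have wit: "similar_mat_wit A B P Q" and ut: "upper_triangular B" and dg: "diag_mat B = es"
    by auto
  note W = similar_mat_witD2[OF A wit]
  have B: "B \<in> carrier_mat n n" and P: "P \<in> carrier_mat n n" and Q: "Q \<in> carrier_mat n n"
    using W by auto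
  have Bk: "B ^\<^sub>m k \<in> carrier_mat n n" using B by simp
  have "(\<Sum>i<n. (A ^\<^sub>m k) $$ (i,i)) = (\<Sum>i<n. (P * (B ^\<^sub>m k * Q)) $$ (i,i))"
    unfolding similar_mat_wit_pow_id[OF wit] using P Bk Q by simp
  also have "\<dots> = (\<Sum>i<n. (B ^\<^sub>m k * Q * P) $$ (i,i))"
    by (rule sum_diag_mult_comm[OF P]) (use Bk Q in simp)
  also have "B ^\<^sub>m k * Q * P = B ^\<^sub>m k"
    using Bk Q P W(2) by (simp add: right_mult_one_mat[OF Bk])
  also have "(\<Sum>i<n. (B ^\<^sub>m k) $$ (i,i)) = (\<Sum>i<n. B $$ (i,i) ^ k)"
    using upper_triangular_power[OF B ut] by simp
  also have "\<dots> = (\<Sum>e\<leftarrow>es. e ^ k)"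
  proof -
    have "es = map (\<lambda>i. B $$ (i,i)) [0..<n]"
      using dg B by (simp add: diag_mat_def)
    then show ?thesis by (simp add: sum_list_sum_nth lessThan_atLeast0)
  qed
  finally show ?thesis .
qed

section \<open>Polynomials in a symmetric matrix\<close>

text \<open>From here on an n \<times> n matrix is a function on pairs of indices below n, so that
  the algebra of matrix polynomials is plain finite-sum algebra without carrier conditions.\<close>

primrec mpow :: "nat \<Rightarrow> (nat \<Rightarrow> nat \<Rightarrow> real) \<Rightarrow> nat \<Rightarrow> nat \<Rightarrow> nat \<Rightarrow> real" where
  "mpow n a 0 i j = (if i = j then 1 else 0)"
| "mpow n a (Suc k) i j = (\<Sum>l<n. a i l * mpow n a k l j)"

definition mpoly :: "nat \<Rightarrow> (nat \<Rightarrow> nat \<Rightarrow> real) \<Rightarrow> real poly \<Rightarrow> nat \<Rightarrow> nat \<Rightarrow> real" where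
  "mpoly n a g i j = (\<Sum>t\<le>degree g. coeff g t * mpow n a t i j)"

definition power_traces :: "nat \<Rightarrow> (nat \<Rightarrow> nat \<Rightarrow> real) \<Rightarrow> real list \<Rightarrow> bool" where
  "power_traces n a es \<longleftrightarrow> (\<forall>k. (\<Sum>i<n. mpow n a k i i) = (\<Sum>e\<leftarrow>es. e ^ k))"

lemma sum_delta_left: "(i::nat) < n \<Longrightarrow> (\<Sum>l<n. (if i = l then 1 else 0) * f l) = (f i :: real)"
  by (simp add: if_distrib[where f = "\<lambda>x. x * _"] cong: if_cong)

lemma mpow_add: "i < n \<Longrightarrow> mpow n a (s + t) i j = (\<Sum>l<n. mpow n a s i l * mpow n a t l j)"
proof (induct s arbitrary: i)
  case 0
  then show ?case by (simp add: sum_delta_left)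
next
  case (Suc s)
  have "mpow n a (Suc s + t) i j = (\<Sum>l<n. \<Sum>m<n. a i l * (mpow n a s l m * mpow n a t m j))"
    using Suc by (simp add: sum_distrib_left)
  also have "\<dots> = (\<Sum>m<n. (\<Sum>l<n. a i l * mpow n a s l m) * mpow n a t m j)"
    by (subst sum.swap) (simp add: sum_distrib_right mult.assoc)
  finally show ?case by simp
qed

lemma mpow_one: "j < n \<Longrightarrow> mpow n a 1 i j = a i j"
  by (simp add: if_distrib[where f = "\<lambda>x. _ * x"] cong: if_cong)

lemma mpow_sym:
  assumes sym: "\<And>i j. a i j = a j i" and "i < n" "j < n"
  shows "mpow n a k i j = mpow n a k j i"
  using assms(2,3)
proof (induct k arbitrary: i j)
  case (Suc k)
  have "mpow n a (Suc k) j i = (\<Sum>l<n. mpow n a k j l * mpow n a 1 l i)"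
    using mpow_add[OF Suc.prems(2), where s = k and t = 1] by simp
  also have "\<dots> = (\<Sum>l<n. a i l * mpow n a k l j)"
  proof (rule sum.cong)
    fix l assume "l \<in> {..<n}"
    then show "mpow n a k j l * mpow n a 1 l i = a i l * mpow n a k l j"
      using Suc mpow_one[of i n a l] by (simp add: sym)
  qed simp
  finally show ?case by simp
qed simp

lemma mpoly_degree_le:
  assumes "degree g \<le> N"
  shows "mpoly n a g i j = (\<Sum>t\<le>N. coeff g t * mpow n a t i j)"
  unfolding mpoly_def
  by (rule sum.mono_neutral_left) (use assms in \<open>auto simp: coeff_eq_0\<close>)

lemma mpoly_add: "mpoly n a (p + q) i j = mpoly n a p i j + mpoly n a q i j"
  using degree_add_le[of p "max (degree p) (degree q)" q]
  by (simp add: mpoly_degree_le[of _ "max (degree p) (degree q)"] sum.distrib distrib_right)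

lemma mpoly_diff: "mpoly n a (p - q) i j = mpoly n a p i j - mpoly n a q i j"
  using degree_diff_le[of p "max (degree p) (degree q)" q]
  by (simp add: mpoly_degree_le[of _ "max (degree p) (degree q)"] sum_subtractf left_diff_distrib)

lemma mpoly_smult: "mpoly n a (Polynomial.smult c p) i j = c * mpoly n a p i j"
  by (simp add: mpoly_degree_le[of _ "degree p"] sum_distrib_left mult.assoc)

lemma mpoly_0 [simp]: "mpoly n a 0 i j = 0"
  by (simp add: mpoly_def)

lemma mpoly_const: "mpoly n a [:c:] i j = (if i = j then c else 0)"
  by (simp add: mpoly_degree_le[of _ 0])

lemma mpoly_pCons_0: "mpoly n a (pCons 0 p) i j = (\<Sum>l<n. a i l * mpoly n a p l j)"
proof -
  have "mpoly n a (pCons 0 p) i j = (\<Sum>t\<le>Suc (degree p). coeff (pCons 0 p) t * mpow n a t i j)"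
    by (rule mpoly_degree_le) (simp add: degree_pCons_le)
  also have "\<dots> = (\<Sum>t\<le>degree p. \<Sum>l<n. coeff p t * (a i l * mpow n a t l j))"
    by (subst sum.atMost_Suc_shift) (simp add: sum_distrib_left)
  also have "\<dots> = (\<Sum>l<n. a i l * mpoly n a p l j)"
    by (subst sum.swap) (simp add: mpoly_def sum_distrib_left mult.left_commute)
  finally show ?thesis .
qed

lemma mpoly_pCons:
  "mpoly n a (pCons c p) i j = (if i = j then c else 0) + (\<Sum>l<n. a i l * mpoly n a p l j)"
proof -
  have "pCons c p = [:c:] + pCons 0 p"
    by (rule poly_eqI) (simp add: coeff_pCons split: nat.split)
  then show ?thesis by (simp only: mpoly_add mpoly_const mpoly_pCons_0)
qed

lemma mpoly_linear: "j < n \<Longrightarrow> mpoly n a [:c, d:] i j = (if i = j then c else 0) + d * a i j"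
  by (simp add: mpoly_pCons mpoly_const if_distrib[where f = "\<lambda>x. _ * x"] cong: if_cong)

lemma mpoly_mult:
  assumes "i < n"
  shows "mpoly n a (p * q) i j = (\<Sum>l<n. mpoly n a p i l * mpoly n a q l j)"
  using assms
proof (induct p arbitrary: i rule: pCons_induct)
  case 0
  then show ?case by simp
next
  case (pCons c p)
  have "mpoly n a (pCons c p * q) i j
      = c * mpoly n a q i j + (\<Sum>l<n. a i l * (\<Sum>m<n. mpoly n a p l m * mpoly n a q m j))"
    using pCons by (simp add: mult_pCons_left mpoly_add mpoly_smult mpoly_pCons)
  also have "\<dots> = (\<Sum>m<n. (if i = m then c else 0) * mpoly n a q m j)
      + (\<Sum>m<n. (\<Sum>l<n. a i l * mpoly n a p l m) * mpoly n a q m j)"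
  proof -
    have "(\<Sum>m<n. (if i = m then c else 0) * mpoly n a q m j) = c * mpoly n a q i j"
      using pCons.prems by (simp add: if_distrib[where f = "\<lambda>x. x * _"] cong: if_cong)
    moreover have "(\<Sum>m<n. (\<Sum>l<n. a i l * mpoly n a p l m) * mpoly n a q m j)
        = (\<Sum>l<n. a i l * (\<Sum>m<n. mpoly n a p l m * mpoly n a q m j))"
      by (simp only: sum_distrib_left sum_distrib_right mult.assoc) (rule sum.swap)
    ultimately show ?thesis by simp
  qed
  also have "\<dots> = (\<Sum>m<n. mpoly n a (pCons c p) i m * mpoly n a q m j)"
    by (simp add: mpoly_pCons distrib_right sum.distrib)
  finally show ?case .
qed

lemma mpoly_sym:
  assumes "\<And>i j. a i j = a j i" and "i < n" "j < n"
  shows "mpoly n a g i j = mpoly n a g j i"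
  unfolding mpoly_def using mpow_sym[OF assms] by simp

lemma sum_diag_mpoly:
  assumes "power_traces n a es"
  shows "(\<Sum>i<n. mpoly n a g i i) = (\<Sum>e\<leftarrow>es. poly g e)"
proof -
  have "(\<Sum>i<n. mpoly n a g i i) = (\<Sum>t\<le>degree g. coeff g t * (\<Sum>i<n. mpow n a t i i))"
    unfolding mpoly_def by (subst sum.swap) (simp add: sum_distrib_left)
  also have "\<dots> = (\<Sum>t\<le>degree g. \<Sum>e\<leftarrow>es. coeff g t * e ^ t)"
    using assms unfolding power_traces_def by (simp add: sum_list_const_mult)
  also have "\<dots> = (\<Sum>e\<leftarrow>es. poly g e)"
    by (induct es) (simp_all add: poly_altdef sum.distrib)
  finally show ?thesis .
qed

lemma mpoly_eq_0_if_vanishes_on_spectrum: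
  assumes sym: "\<And>i j. a i j = a j i" and traces: "power_traces n a es"
    and vanish: "\<forall>e\<in>set es. poly g e = 0" and "i < n" "j < n"
  shows "mpoly n a g i j = 0"
proof -
  let ?G = "mpoly n a g"
  have "(\<Sum>i<n. \<Sum>l<n. (?G i l)\<^sup>2) = (\<Sum>i<n. mpoly n a (g * g) i i)"
    using mpoly_sym[OF sym] by (intro sum.cong refl) (simp add: mpoly_mult power2_eq_square)
  also have "\<dots> = (\<Sum>e\<leftarrow>es. poly (g * g) e)"
    by (rule sum_diag_mpoly[OF traces])
  also have "\<dots> = 0"
    using vanish by (induct es) auto
  finally have "(\<Sum>i<n. \<Sum>l<n. (?G i l)\<^sup>2) = 0" .
  then have "(?G i j)\<^sup>2 = 0"
    using assms(4,5) by (simp add: sum_nonneg_eq_0_iff sum_nonneg)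
  then show ?thesis by simp
qed

lemma exists_poly_interpolating:
  fixes f :: "real \<Rightarrow> real"
  assumes "finite X"
  shows "\<exists>h. \<forall>x\<in>X. poly h x = f x"
  using assms
proof (induct X rule: finite_induct)
  case (insert y X)
  then obtain h where h: "\<forall>x\<in>X. poly h x = f x" by blast
  define P where "P = (\<Prod>x\<in>X. [:-x, 1:])"
  have "poly P x = 0" if "x \<in> X" for x
    unfolding P_def poly_prod using insert that by (auto intro: prod_zero)
  moreover have "poly P y \<noteq> 0"
    unfolding P_def poly_prod using insert by auto
  ultimately have
    "\<forall>x\<in>insert y X. poly (h + Polynomial.smult ((f y - poly h y) / poly P y) P) x = f x"
    using h by auto
  then show ?case by blast
qed simp

lemma mpoly_gram_if_nonneg_on_spectrum:
  assumes sym: "\<And>i j. a i j = a j i" and traces: "power_traces n a es"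
    and nonneg: "\<forall>e\<in>set es. poly q e \<ge> 0"
  obtains H where "\<And>i j. i < n \<Longrightarrow> j < n \<Longrightarrow> mpoly n a q i j = (\<Sum>l<n. H i l * H j l)"
proof -
  obtain h where h: "\<forall>e\<in>set es. poly h e = sqrt (poly q e)"
    using exists_poly_interpolating[of "set es" "\<lambda>e. sqrt (poly q e)"] by auto
  have "\<forall>e\<in>set es. poly (h * h - q) e = 0"
    using h nonneg by (simp add: real_sqrt_mult_self)
  then have "mpoly n a (h * h - q) i j = 0" if "i < n" "j < n" for i j
    using mpoly_eq_0_if_vanishes_on_spectrum[OF sym traces _ that] by blast
  then have "mpoly n a q i j = mpoly n a (h * h) i j" if "i < n" "j < n" for i j
    using that by (simp add: mpoly_diff)
  also have "mpoly n a (h * h) i j = (\<Sum>l<n. mpoly n a h i l * mpoly n a h j l)"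
    if "i < n" "j < n" for i j
    using that mpoly_sym[OF sym _ that(2)] by (simp add: mpoly_mult)
  finally show thesis by (rule that)
qed

section \<open>Graphs whose spectrum lies on one side of \<plusminus>1\<close>

definition adjacency :: "(nat \<Rightarrow> nat \<Rightarrow> bool) \<Rightarrow> nat \<Rightarrow> nat \<Rightarrow> real" where
  "adjacency E i j = (if E i j then 1 else 0)"

lemma adjacency_sym: "simple_graph n E \<Longrightarrow> adjacency E i j = adjacency E j i"
  unfolding adjacency_def simple_graph_def by auto

lemma gram_quadratic_form_nonneg:
  fixes H :: "nat \<Rightarrow> nat \<Rightarrow> real"
  assumes "\<And>p q. p \<in> {i, j, k} \<Longrightarrow> q \<in> {i, j, k} \<Longrightarrow> G p q = (\<Sum>l\<in>L. H p l * H q l)"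
  shows "0 \<le> G i i + G j j + z\<^sup>2 * G k k + 2 * G i j + 2 * z * G i k + 2 * z * G j k"
proof -
  have "0 \<le> (\<Sum>l\<in>L. (H i l + H j l + z * H k l)\<^sup>2)" by (rule sum_nonneg) simp
  also have "\<dots> = G i i + G j j + z\<^sup>2 * G k k + 2 * G i j + 2 * z * G i k + 2 * z * G j k"
    by (simp add: assms power2_eq_square algebra_simps sum.distrib sum_distrib_left)
  finally show ?thesis .
qed

lemma common_neighbour_imp_adjacent:
  assumes G: "simple_graph n E" and traces: "power_traces n (adjacency E) es"
    and one_sided: "(\<forall>e\<in>set es. -1 \<le> e) \<or> (\<forall>e\<in>set es. e \<le> 1)"
    and "E i k" "E j k" "i \<noteq> j"
  shows "E i j"
proof (rule ccontr)
  assume "\<not> E i j"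
  obtain s :: real where s: "s * s = 1" and nonneg: "\<forall>e\<in>set es. 0 \<le> poly [:1, s:] e"
  proof (cases "\<forall>e\<in>set es. -1 \<le> e")
    case True
    then show thesis by (intro that[of 1]) auto
  next
    case False
    then show thesis using one_sided by (intro that[of "-1"]) auto
  qed
  define M where "M = mpoly n (adjacency E) [:1, s:]"
  obtain H where H: "\<And>p q. p < n \<Longrightarrow> q < n \<Longrightarrow> M p q = (\<Sum>l<n. H p l * H q l)"
    unfolding M_def
    using mpoly_gram_if_nonneg_on_spectrum[OF adjacency_sym[OF G] traces nonneg] by blast
  have "i < n" "j < n" "k < n" "i \<noteq> k" "j \<noteq> k"
    using G \<open>E i k\<close> \<open>E j k\<close> unfolding simple_graph_def by auto
  moreover have "\<not> E p p" for p
    using G unfolding simple_graph_def by blast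
  ultimately have "M i i = 1" "M j j = 1" "M k k = 1" "M i j = 0" "M i k = s" "M j k = s"
    using \<open>E i k\<close> \<open>E j k\<close> \<open>\<not> E i j\<close> \<open>i \<noteq> j\<close>
    by (simp_all add: M_def mpoly_linear adjacency_def)
  moreover have "0 \<le> M i i + M j j + (-2 * s)\<^sup>2 * M k k + 2 * M i j + 2 * (-2 * s) * M i k
      + 2 * (-2 * s) * M j k"
    by (rule gram_quadratic_form_nonneg[where H = H and L = "{..<n}"])
      (use H \<open>i < n\<close> \<open>j < n\<close> \<open>k < n\<close> in auto)
  ultimately show False using s by (simp add: power2_eq_square algebra_simps)
qed

lemma simple_graph_rtranclp_sym:
  assumes "simple_graph n E" and "E\<^sup>*\<^sup>* x y"
  shows "E\<^sup>*\<^sup>* y x"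
  using assms(2)
proof (induct rule: rtranclp_induct)
  case (step y z)
  then show ?case
    using assms(1) unfolding simple_graph_def by (meson converse_rtranclp_into_rtranclp)
qed simp

lemma union_of_cliques_if_common_neighbour_imp_adjacent:
  assumes G: "simple_graph n E"
    and closed: "\<And>i j k. E i k \<Longrightarrow> E j k \<Longrightarrow> i \<noteq> j \<Longrightarrow> E i j"
  shows "union_of_cliques n E"
proof -
  have reach: "v = u \<or> E v u" if "E\<^sup>*\<^sup>* v u" for v u
    using that
  proof (induct rule: rtranclp_induct)
    case (step u w)
    then show ?case
      using G closed unfolding simple_graph_def by blast
  qed simp
  show ?thesis
    unfolding union_of_cliques_def components_def component_def
    using reach simple_graph_rtranclp_sym[OF G] by (blast intro: rtranclp_trans)
qed

lemma union_of_cliques_if_power_traces_one_sided: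
  assumes "simple_graph n E" and "power_traces n (adjacency E) es"
    and "(\<forall>e\<in>set es. -1 \<le> e) \<or> (\<forall>e\<in>set es. e \<le> 1)"
  shows "union_of_cliques n E"
  using union_of_cliques_if_common_neighbour_imp_adjacent common_neighbour_imp_adjacent assms
  by blast

section \<open>Spectra of disjoint unions of cliques\<close>

lemma real_size_filter_mset_mset:
  "real (size (filter_mset P (mset xs))) = (\<Sum>x\<leftarrow>xs. if P x then 1 else 0)"
  by (induct xs) auto

lemma component_self: "v < n \<Longrightarrow> v \<in> component n E v"
  unfolding component_def by simp

lemma component_subset: "component n E v \<subseteq> {..<n}"
  unfolding component_def by auto

lemma finite_component: "finite (component n E v)"
  using component_subset[of n E v] by (rule finite_subset) simp

lemma card_component_pos: "v < n \<Longrightarrow> 0 < card (component n E v)"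
  using component_self[of v n E] finite_component[of n E v] by (auto simp: card_gt_0_iff)

lemma component_eq:
  assumes "simple_graph n E" and "u \<in> component n E v"
  shows "component n E u = component n E v"
proof -
  have "E\<^sup>*\<^sup>* v u" using assms(2) unfolding component_def by simp
  moreover from this have "E\<^sup>*\<^sup>* u v" by (rule simple_graph_rtranclp_sym[OF assms(1)])
  ultimately show ?thesis unfolding component_def by (blast intro: rtranclp_trans)
qed

context
  fixes n :: nat and E :: "nat \<Rightarrow> nat \<Rightarrow> bool"
  assumes simple: "simple_graph n E" and cliques: "union_of_cliques n E"
begin

lemma adjacent_iff_in_component:
  assumes "i < n"
  shows "E i j \<longleftrightarrow> j \<in> component n E i \<and> i \<noteq> j"
proof
  assume "E i j"
  then show "j \<in> component n E i \<and> i \<noteq> j"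
    using simple unfolding simple_graph_def component_def by auto
next
  assume "j \<in> component n E i \<and> i \<noteq> j"
  moreover have "component n E i \<in> components n E"
    using assms unfolding components_def by simp
  ultimately show "E i j"
    using cliques component_self[OF assms, of E] unfolding union_of_cliques_def by blast
qed

lemma sum_adjacency:
  assumes "i < n"
  shows "(\<Sum>l<n. adjacency E i l * f l) = (\<Sum>l\<in>component n E i - {i}. f l)"
proof -
  have "(\<Sum>l<n. adjacency E i l * f l) = (\<Sum>l<n. if l \<in> component n E i - {i} then f l else 0)"
    by (rule sum.cong) (auto simp: adjacency_def adjacent_iff_in_component[OF assms])
  also have "\<dots> = (\<Sum>l\<in>{..<n} \<inter> (component n E i - {i}). f l)"
    by (simp add: sum.inter_restrict)
  also have "{..<n} \<inter> (component n E i - {i}) = component n E i - {i}"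
    using component_subset[of n E] by auto
  finally show ?thesis .
qed

text \<open>On a clique K_m the adjacency matrix is J - I, whence
  A^k = (-1)^k I + ((m-1)^k - (-1)^k)/m J.\<close>
lemma mpow_adjacency:
  assumes "i < n" "j < n"
  defines "m \<equiv> real (card (component n E i))"
  shows "mpow n (adjacency E) k i j = (if i = j then (-1) ^ k else 0)
     + (if j \<in> component n E i then ((m - 1) ^ k - (-1) ^ k) / m else 0)"
  using assms(1,2) unfolding m_def
proof (induct k arbitrary: i j)
  case (Suc k)
  let ?C = "component n E i"
  let ?m = "real (card ?C)"
  have "mpow n (adjacency E) (Suc k) i j = (\<Sum>l\<in>?C - {i}. mpow n (adjacency E) k l j)"
    using sum_adjacency[OF Suc.prems(1)] by simp
  also have "\<dots> = (\<Sum>l\<in>?C - {i}. (if l = j then (-1) ^ k else 0)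
      + (if j \<in> ?C then ((?m - 1) ^ k - (-1) ^ k) / ?m else 0))"
  proof (rule sum.cong)
    fix l assume "l \<in> ?C - {i}"
    then have "l < n" "component n E l = ?C"
      using component_subset[of n E] component_eq[OF simple] by auto
    then show "mpow n (adjacency E) k l j = (if l = j then (-1) ^ k else 0)
        + (if j \<in> ?C then ((?m - 1) ^ k - (-1) ^ k) / ?m else 0)"
      using Suc.hyps[OF _ Suc.prems(2)] by simp
  qed simp
  also have "\<dots> = (if j \<in> ?C - {i} then (-1) ^ k else 0)
      + (?m - 1) * (if j \<in> ?C then ((?m - 1) ^ k - (-1) ^ k) / ?m else 0)"
    using finite_component[of n E] component_self[OF Suc.prems(1), of E]
      card_component_pos[OF Suc.prems(1), of E]
    by (simp add: sum.distrib of_nat_diff)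
  also have "\<dots> = (if i = j then (-1) ^ Suc k else 0)
      + (if j \<in> ?C then ((?m - 1) ^ Suc k - (-1) ^ Suc k) / ?m else 0)"
    using card_component_pos[OF Suc.prems(1), of E] component_self[OF Suc.prems(1), of E]
    by (auto simp: field_simps)
  finally show ?case .
qed simp

lemma mpoly_adjacency_diag:
  assumes "i < n"
  defines "m \<equiv> real (card (component n E i))"
  shows "mpoly n (adjacency E) g i i = poly g (-1) + (poly g (m - 1) - poly g (-1)) / m"
proof -
  have "mpoly n (adjacency E) g i i
      = (\<Sum>t\<le>degree g. coeff g t * (-1) ^ t)
        + ((\<Sum>t\<le>degree g. coeff g t * (m - 1) ^ t) - (\<Sum>t\<le>degree g. coeff g t * (-1) ^ t)) / m"
    using assms component_self[OF assms(1), of E]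
    by (simp add: mpoly_def mpow_adjacency sum.distrib distrib_left sum_divide_distrib
        right_diff_distrib diff_divide_distrib sum_subtractf)
  then show ?thesis by (simp add: poly_altdef)
qed

lemma sum_diag_mpoly_adjacency:
  "(\<Sum>i<n. mpoly n (adjacency E) g i i)
     = real n * poly g (-1) + (\<Sum>C\<in>components n E. poly g (real (card C) - 1) - poly g (-1))"
proof -
  define F where "F C = (poly g (real (card C) - 1) - poly g (-1)) / real (card C)"
    for C :: "nat set"
  have "(\<Sum>i<n. mpoly n (adjacency E) g i i) = real n * poly g (-1) + (\<Sum>i<n. F (component n E i))"
    by (simp add: mpoly_adjacency_diag F_def sum.distrib)
  also have "(\<Sum>i<n. F (component n E i))
      = (\<Sum>C\<in>components n E. \<Sum>i\<in>{x\<in>{..<n}. component n E x = C}. F (component n E i))"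
    unfolding components_def by (rule sum.group[symmetric]) auto
  also have "\<dots> = (\<Sum>C\<in>components n E. card C * F C)"
  proof (rule sum.cong)
    fix C assume "C \<in> components n E"
    then obtain v where "v < n" "C = component n E v" unfolding components_def by auto
    then have "{x\<in>{..<n}. component n E x = C} = C"
      using component_self[of _ n E] component_subset[of n E] component_eq[OF simple] by blast
    moreover have "(\<Sum>i\<in>C. F (component n E i)) = (\<Sum>i\<in>C. F C)"
      using \<open>C = component n E v\<close> component_eq[OF simple] by (intro sum.cong) auto
    ultimately show "(\<Sum>i\<in>{x\<in>{..<n}. component n E x = C}. F (component n E i)) = card C * F C"
      by simp
  qed simp
  also have "\<dots> = (\<Sum>C\<in>components n E. poly g (real (card C) - 1) - poly g (-1))"
    using card_component_pos[of _ n E] unfolding F_def components_def by (intro sum.cong) auto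
  finally show ?thesis .
qed

lemma num_non_K2_components_eq_exceptional:
  assumes traces: "power_traces n (adjacency E) es"
  shows "size (filter_mset (\<lambda>x. x \<noteq> 1 \<and> x \<noteq> -1) (mset es)) = num_non_K2_components n E"
proof -
  define exceptional :: "real \<Rightarrow> real" where
    "exceptional = (\<lambda>x. if x \<noteq> 1 \<and> x \<noteq> -1 then 1 else 0)"
  define X where "X = set es \<union> {-1} \<union> (\<lambda>C. real (card C) - 1) ` components n E"
  have "finite X" unfolding X_def components_def by simp
  then obtain h where h: "\<forall>x\<in>X. poly h x = exceptional x"
    using exists_poly_interpolating[OF \<open>finite X\<close>, of exceptional] by blast
  have h_spectrum: "poly h e = exceptional e" if "e \<in> set es" for e
    using h that unfolding X_def by simp
  have h_minus_one: "poly h (-1) = 0"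
    using h unfolding X_def exceptional_def by simp
  have h_components: "poly h (real (card C) - 1) = (if card C \<noteq> 2 then 1 else 0)"
    if C: "C \<in> components n E" for C
  proof -
    obtain v where "v < n" "C = component n E v"
      using C unfolding components_def by blast
    then have "1 \<le> card C"
      using card_component_pos[of _ n E] by (simp add: Suc_le_eq)
    moreover have "poly h (real (card C) - 1) = exceptional (real (card C) - 1)"
      using h C unfolding X_def by simp
    ultimately show ?thesis unfolding exceptional_def by auto
  qed
  have "real (size (filter_mset (\<lambda>x. x \<noteq> 1 \<and> x \<noteq> -1) (mset es))) = (\<Sum>e\<leftarrow>es. exceptional e)"
    unfolding exceptional_def by (rule real_size_filter_mset_mset)
  also have "\<dots> = (\<Sum>e\<leftarrow>es. poly h e)"
    using h_spectrum by (intro arg_cong[where f = sum_list] map_cong) auto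
  also have "\<dots> = (\<Sum>i<n. mpoly n (adjacency E) h i i)"
    by (rule sum_diag_mpoly[OF traces, symmetric])
  also have "\<dots> = real n * poly h (-1)
      + (\<Sum>C\<in>components n E. poly h (real (card C) - 1) - poly h (-1))"
    by (rule sum_diag_mpoly_adjacency)
  also have "\<dots> = (\<Sum>C\<in>components n E. if card C \<noteq> 2 then 1 else 0)"
    using h_components by (simp add: h_minus_one)
  also have "\<dots> = real (num_non_K2_components n E)"
    unfolding num_non_K2_components_def components_def by (simp add: sum.If_cases Int_def)
  finally show ?thesis by (simp only: of_nat_eq_iff)
qed

lemma perfect_matching_if_no_non_K2_components:
  assumes "num_non_K2_components n E = 0"
  shows "perfect_matching n E"
  unfolding perfect_matching_def
proof (intro allI impI)
  fix v assume "v < n"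
  then have "card (component n E v) = 2"
    using assms unfolding num_non_K2_components_def components_def by auto
  moreover have "{u. E v u} = component n E v - {v}"
    using adjacent_iff_in_component[OF \<open>v < n\<close>] by auto
  ultimately show "card {u. E v u} = 1"
    using component_self[OF \<open>v < n\<close>, of E] finite_component[of n E] by simp
qed

end

lemma adj_matrix_carrier: "adj_matrix n E \<in> carrier_mat n n"
  by (simp add: adj_matrix_def)

lemma adj_matrix_index: "i < n \<Longrightarrow> j < n \<Longrightarrow> adj_matrix n E $$ (i,j) = adjacency E i j"
  by (simp add: adj_matrix_def adjacency_def)

lemma adj_matrix_power_index:
  assumes "i < n" "j < n"
  shows "(adj_matrix n E ^\<^sub>m k) $$ (i,j) = mpow n (adjacency E) k i j"
  using assms(2)
proof (induct k arbitrary: j)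
  case 0
  then show ?case using assms(1) adj_matrix_carrier[of n E] by simp
next
  case (Suc k)
  have "(adj_matrix n E ^\<^sub>m k * adj_matrix n E) $$ (i,j)
      = (\<Sum>l<n. (adj_matrix n E ^\<^sub>m k) $$ (i,l) * adj_matrix n E $$ (l,j))"
    by (rule index_mult_mat_sum) (use adj_matrix_carrier assms(1) Suc.prems in auto)
  also have "\<dots> = (\<Sum>l<n. mpow n (adjacency E) k i l * adjacency E l j)"
    using Suc by (intro sum.cong refl) (simp add: adj_matrix_index)
  also have "\<dots> = (\<Sum>l<n. mpow n (adjacency E) k i l * mpow n (adjacency E) 1 l j)"
    by (simp only: mpow_one[OF Suc.prems])
  also have "\<dots> = mpow n (adjacency E) (k + 1) i j"
    by (rule mpow_add[OF assms(1), symmetric])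
  finally show ?case by simp
qed

lemma adj_matrix_spectrum:
  assumes "simple_graph n E"
  obtains es where "eigenvalues_mset (adj_matrix n E) = mset es"
    and "power_traces n (adjacency E) es"
proof -
  let ?A = "adj_matrix n E"
  have "\<forall>i<n. \<forall>j<n. ?A $$ (i,j) = ?A $$ (j,i)"
    using adjacency_sym[OF assms] by (simp add: adj_matrix_index)
  then obtain es where cp: "char_poly ?A = (\<Prod>e\<leftarrow>es. [:-e, 1:])"
    using char_poly_real_symmetric_splits[OF adj_matrix_carrier] by blast
  have "(\<Sum>i<n. mpow n (adjacency E) k i i) = (\<Sum>e\<leftarrow>es. e ^ k)" for k
  proof -
    have "(\<Sum>i<n. mpow n (adjacency E) k i i) = (\<Sum>i<n. (?A ^\<^sub>m k) $$ (i,i))"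
      by (intro sum.cong refl) (simp add: adj_matrix_power_index)
    also have "\<dots> = (\<Sum>e\<leftarrow>es. e ^ k)"
      by (rule sum_diag_power_char_poly[OF adj_matrix_carrier cp])
    finally show ?thesis .
  qed
  then have "power_traces n (adjacency E) es"
    unfolding power_traces_def by blast
  moreover have "eigenvalues_mset ?A = mset es"
    unfolding eigenvalues_mset_def cp by (rule proots_prod_linear_factors)
  ultimately show thesis by (rule that[rotated])
qed

lemma union_of_cliques_if_eigenvalues_one_sided:
  assumes "simple_graph n E"
    and "(\<forall>x\<in>#eigenvalues_mset (adj_matrix n E). -1 \<le> x)
      \<or> (\<forall>x\<in>#eigenvalues_mset (adj_matrix n E). x \<le> 1)"
  shows "union_of_cliques n E"
proof -
  obtain es where "eigenvalues_mset (adj_matrix n E) = mset es" "power_traces n (adjacency E) es"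
    using adj_matrix_spectrum[OF assms(1)] .
  then show ?thesis
    using union_of_cliques_if_power_traces_one_sided[OF assms(1)] assms(2) by simp
qed

lemma num_non_K2_components_eq_exceptional_eigenvalues:
  assumes "simple_graph n E" and "union_of_cliques n E"
  shows "size (filter_mset (\<lambda>x. x \<noteq> 1 \<and> x \<noteq> -1) (eigenvalues_mset (adj_matrix n E)))
    = num_non_K2_components n E"
proof -
  obtain es where "eigenvalues_mset (adj_matrix n E) = mset es" "power_traces n (adjacency E) es"
    using adj_matrix_spectrum[OF assms(1)] .
  then show ?thesis using num_non_K2_components_eq_exceptional[OF assms] by simp
qed

lemma one_sided_if_exceptional_one_sided:
  fixes M :: "real multiset"
  assumes "(\<forall>x\<in>#filter_mset (\<lambda>x. x \<noteq> 1 \<and> x \<noteq> -1) M. -1 \<le> x)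
    \<or> (\<forall>x\<in>#filter_mset (\<lambda>x. x \<noteq> 1 \<and> x \<noteq> -1) M. x \<le> 1)"
  shows "(\<forall>x\<in>#M. -1 \<le> x) \<or> (\<forall>x\<in>#M. x \<le> 1)"
proof (rule disjE[OF assms])
  assume "\<forall>x\<in>#filter_mset (\<lambda>x. x \<noteq> 1 \<and> x \<noteq> -1) M. -1 \<le> x"
  then have "-1 \<le> x" if "x \<in># M" for x
    using that by (cases "x = 1 \<or> x = -1") auto
  then show ?thesis by blast
next
  assume "\<forall>x\<in>#filter_mset (\<lambda>x. x \<noteq> 1 \<and> x \<noteq> -1) M. x \<le> 1"
  then have "x \<le> 1" if "x \<in># M" for x
    using that by (cases "x = 1 \<or> x = -1") auto
  then show ?thesis by blast
qed

lemma union_of_cliques_if_exceptional_eigenvalues_one_sided: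
  assumes "simple_graph n E"
    and "(\<forall>x\<in>#filter_mset (\<lambda>x. x \<noteq> 1 \<and> x \<noteq> -1) (eigenvalues_mset (adj_matrix n E)). -1 \<le> x)
      \<or> (\<forall>x\<in>#filter_mset (\<lambda>x. x \<noteq> 1 \<and> x \<noteq> -1) (eigenvalues_mset (adj_matrix n E)). x \<le> 1)"
  shows "union_of_cliques n E
    \<and> size (filter_mset (\<lambda>x. x \<noteq> 1 \<and> x \<noteq> -1) (eigenvalues_mset (adj_matrix n E)))
      = num_non_K2_components n E"
proof
  show "union_of_cliques n E"
    using union_of_cliques_if_eigenvalues_one_sided[OF assms(1)]
      one_sided_if_exceptional_one_sided[OF assms(2)] .
  then show "size (filter_mset (\<lambda>x. x \<noteq> 1 \<and> x \<noteq> -1) (eigenvalues_mset (adj_matrix n E)))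
      = num_non_K2_components n E"
    by (rule num_non_K2_components_eq_exceptional_eigenvalues[OF assms(1)])
qed

theorem proposition2p2:
  fixes n :: nat and E :: "nat \<Rightarrow> nat \<Rightarrow> bool"
  assumes "simple_graph n E"
  shows "((\<forall>x \<in># eigenvalues_mset (adj_matrix n E). x = 1 \<or> x = -1)
           \<longrightarrow> perfect_matching n E)
       \<and> (size (filter_mset (\<lambda>x. x \<noteq> 1 \<and> x \<noteq> -1) (eigenvalues_mset (adj_matrix n E))) = 1
           \<longrightarrow> union_of_cliques n E \<and> num_non_K2_components n E = 1)
       \<and> (\<forall>r s :: real. r \<ge> s \<and>
           filter_mset (\<lambda>x. x \<noteq> 1 \<and> x \<noteq> -1) (eigenvalues_mset (adj_matrix n E)) = {#r, s#}
           \<longrightarrow> (r > 1 \<and> s < -1) \<or> (union_of_cliques n E \<and> num_non_K2_components n E = 2))"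
proof (intro conjI[of "_ \<longrightarrow> _"] impI allI)
  let ?X = "filter_mset (\<lambda>x. x \<noteq> 1 \<and> x \<noteq> -1) (eigenvalues_mset (adj_matrix n E))"
  note cliques = union_of_cliques_if_exceptional_eigenvalues_one_sided[OF assms]
  {
    assume "\<forall>x \<in># eigenvalues_mset (adj_matrix n E). x = 1 \<or> x = -1"
    then have X: "?X = {#}" by auto
    have "union_of_cliques n E \<and> size ?X = num_non_K2_components n E"
      by (rule cliques) (simp add: X)
    then show "perfect_matching n E"
      unfolding X by (simp add: perfect_matching_if_no_non_K2_components[OF assms])
  next
    assume size_1: "size ?X = 1"
    then obtain \<mu> where "?X = {#\<mu>#}" using size_1_singleton_mset by blast
    then have "union_of_cliques n E \<and> size ?X = num_non_K2_components n E"
      by (intro cliques) auto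
    with size_1 show "union_of_cliques n E \<and> num_non_K2_components n E = 1" by simp
  next
    fix r s :: real
    assume "s \<le> r \<and> ?X = {#r, s#}"
    then have "union_of_cliques n E \<and> size ?X = num_non_K2_components n E"
      if "\<not> (r > 1 \<and> s < -1)"
      using that by (intro cliques) auto
    with \<open>s \<le> r \<and> ?X = {#r, s#}\<close>
    show "(r > 1 \<and> s < -1) \<or> (union_of_cliques n E \<and> num_non_K2_components n E = 2)"
      by (cases "r > 1 \<and> s < -1") auto
  }
qed

end
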